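(* Let $r\in\{2,3\}$. There exists $\eta_0>0$ such that for every $0<\eta<\eta_0$ there is $n_0=n_0(\eta,r)$ such that every $r$-uniform hypergraph $H$ on $n>n_0$ vertices with $|E(H)|\geq \eta\binom{n}{r}$ contains a copy of $K^{(r)}(t)$, where $t=\eta(\log n)^{1/(r-1)}$.
   Context: An $r$-uniform hypergraph has edges that are $r$-element subsets of its vertex set. $K^{(r)}(t)$ denotes the complete balanced $r$-partite $r$-uniform hypergraph: vertex set partitioned into $r$ classes each of size $t$, and edges all $r$-sets with exactly one vertex in each class. $\log$ is base $2$. *)

theory Defs
  imports Complex_Main
begin

definition uniform_hypergraph :: "nat \<Rightarrow> 'a set \<Rightarrow> 'a set set \<Rightarrow> bool" where
  "uniform_hypergraph r V E \<longleftrightarrow> finite V \<and> (\<forall>e\<in>E. e \<subseteq> V \<and> card e = r)"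

definition contains_K :: "nat \<Rightarrow> nat \<Rightarrow> 'a set \<Rightarrow> 'a set set \<Rightarrow> bool" where
  "contains_K r t V E \<longleftrightarrow>
     (\<exists>A :: nat \<Rightarrow> 'a set.
        (\<forall>i<r. A i \<subseteq> V \<and> card (A i) = t) \<and>
        (\<forall>i<r. \<forall>j<r. i \<noteq> j \<longrightarrow> A i \<inter> A j = {}) \<and>
        (\<forall>f. (\<forall>i<r. f i \<in> A i) \<longrightarrow> f ` {..<r} \<in> E))"

end

theory Submission
  imports Defs "HOL-Real_Asymp.Real_Asymp"
begin

text \<open>
  A relation of density \<delta> between finite sets X and Y has a t-subset S of Y whose common
  neighbourhood contains at least (\<delta>/2)(\<delta>/4)^t |X| elements: at least \<delta>|X|/2 elements of X have
  degree \<ge> \<delta>|Y|/2, and double counting the pairs (x, S) with S a t-subset of the neighbourhood of x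
  gives such an S.
  For graphs one application on V \<times> V yields K(t,t) as soon as n (\<eta>/16)^(t+1) \<ge> t, which holds for
  t = \<lceil>\<eta> log n\<rceil> when \<eta> log(1/\<eta>) is small. For 3-graphs a first application on (V \<times> V) \<times> V gives t
  vertices together with a set of pairs of density 2\<beta>^(t+1), \<beta> = \<eta>/108, all completed by them to
  edges; a second application on that set of pairs then needs n \<beta>^((t+2)^2) \<ge> t, which limits t to
  order \<eta> sqrt(log n). The classes found are automatically disjoint, since a transversal repeating a
  vertex would be an edge with fewer than r vertices.
\<close>

lemma binomial_mult_power_le:
  assumes "k \<le> n" "real t \<le> real k / 2"
  shows "real (n choose t) * (real k / (2 * real n)) ^ t \<le> real (k choose t)"
proof -
  have "t \<le> k" "t \<le> n" using assms by linarith+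
  then have "real (n choose t) * (real k / (2 * real n)) ^ t
      = (\<Prod>i = 0..<t. real (n - i) / real (t - i) * (real k / (2 * real n)))"
    by (simp only: binomial_altdef_of_nat prod.distrib prod_constant card_atLeastLessThan diff_zero)
  also have "\<dots> \<le> (\<Prod>i = 0..<t. real (k - i) / real (t - i))"
  proof (rule prod_mono)
    fix i assume "i \<in> {0..<t}"
    then have "i < t" "i < n" using \<open>t \<le> n\<close> by auto
    have "real (n - i) * (real k / (2 * real n)) \<le> real k / 2"
      using \<open>i < n\<close> by (simp add: field_simps of_nat_diff mult_right_mono)
    also have "\<dots> \<le> real (k - i)" using assms(2) \<open>i < t\<close> \<open>t \<le> k\<close> by (simp add: of_nat_diff)
    finally have "real (n - i) * (real k / (2 * real n)) / real (t - i) \<le> real (k - i) / real (t - i)"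
      by (rule divide_right_mono) simp
    then show "0 \<le> real (n - i) / real (t - i) * (real k / (2 * real n)) \<and>
        real (n - i) / real (t - i) * (real k / (2 * real n)) \<le> real (k - i) / real (t - i)"
      by (simp only: times_divide_eq_left mult.commute[of "real k / (2 * real n)"]) simp
  qed
  also have "\<dots> = real (k choose t)" using \<open>t \<le> k\<close> by (simp add: binomial_altdef_of_nat)
  finally show ?thesis .
qed

lemma reverse_markov_card:
  fixes f :: "'a \<Rightarrow> real" and M \<delta> :: real
  assumes "finite X" "0 < M" "0 \<le> \<delta>" "\<And>x. x \<in> X \<Longrightarrow> f x \<le> M"
    and "\<delta> * card X * M \<le> (\<Sum>x\<in>X. f x)"
  shows "\<delta> * card X / 2 \<le> card {x\<in>X. \<delta> * M / 2 \<le> f x}"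
proof -
  define G where "G = {x\<in>X. \<delta> * M / 2 \<le> f x}"
  have "G \<subseteq> X" by (auto simp: G_def)
  have "\<delta> * card X * M \<le> (\<Sum>x\<in>G. f x) + (\<Sum>x\<in>X - G. f x)"
    using assms(5) sum.subset_diff[OF \<open>G \<subseteq> X\<close> \<open>finite X\<close>, of f] by simp
  also have "\<dots> \<le> card G * M + card (X - G) * (\<delta> * M / 2)"
    using assms(4) \<open>G \<subseteq> X\<close>
    by (intro add_mono sum_bounded_above) (auto simp: G_def)
  also have "\<dots> \<le> card G * M + card X * (\<delta> * M / 2)"
    using assms(1-3) by (intro add_left_mono mult_right_mono) (auto intro: card_mono)
  finally have "(\<delta> * card X / 2) * M \<le> card G * M" by (simp add: algebra_simps)
  then show ?thesis using assms(2) by (simp add: G_def)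
qed

lemma sum_binomial_card_eq_sum_card_common:
  assumes "finite G" "finite Y" "\<And>x. x \<in> G \<Longrightarrow> N x \<subseteq> Y"
  shows "(\<Sum>x\<in>G. card (N x) choose t) = (\<Sum>S\<in>{S. S \<subseteq> Y \<and> card S = t}. card {x\<in>G. S \<subseteq> N x})"
proof -
  let ?T = "{S. S \<subseteq> Y \<and> card S = t}"
  have "card (N x) choose t = card {S\<in>?T. S \<subseteq> N x}" if "x \<in> G" for x
  proof -
    have "{S\<in>?T. S \<subseteq> N x} = {S. S \<subseteq> N x \<and> card S = t}" using assms(3)[OF that] by blast
    then show ?thesis using n_subsets assms(2,3) that by (metis finite_subset)
  qed
  then have "(\<Sum>x\<in>G. card (N x) choose t) = (\<Sum>x\<in>G. \<Sum>S\<in>{S\<in>?T. S \<subseteq> N x}. 1)" by simp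
  also have "\<dots> = (\<Sum>S\<in>?T. \<Sum>x\<in>{x\<in>G. S \<subseteq> N x}. 1)"
    using assms(1,2) by (intro sum.swap_restrict) auto
  finally show ?thesis by simp
qed

lemma exists_ge_average:
  fixes f :: "'a \<Rightarrow> real" and b :: real
  assumes "finite T" "T \<noteq> {}" "card T * b \<le> (\<Sum>x\<in>T. f x)"
  shows "\<exists>x\<in>T. b \<le> f x"
proof (rule ccontr)
  assume "\<not> ?thesis"
  then have "(\<Sum>x\<in>T. f x) < (\<Sum>x\<in>T. b)" using assms(1,2) by (intro sum_strict_mono) auto
  with assms(3) show False by simp
qed

lemma exists_subset_large_common_neighbourhood:
  fixes q :: real
  assumes "finite G" "finite Y" "\<And>x. x \<in> G \<Longrightarrow> N x \<subseteq> Y" "t \<le> card Y"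
    and "\<And>x. x \<in> G \<Longrightarrow> real (card Y choose t) * q \<le> real (card (N x) choose t)"
  shows "\<exists>S\<subseteq>Y. card S = t \<and> card G * q \<le> card {x\<in>G. S \<subseteq> N x}"
proof -
  define T where "T = {S. S \<subseteq> Y \<and> card S = t}"
  have "finite T" unfolding T_def using assms(2) by simp
  have "card T = card Y choose t" unfolding T_def using assms(2) by (rule n_subsets)
  obtain S0 where "S0 \<subseteq> Y" "card S0 = t" using assms(4) by (rule obtain_subset_with_card_n)
  then have "T \<noteq> {}" by (auto simp: T_def)
  have "card T * (card G * q) = card G * (real (card Y choose t) * q)" by (simp add: \<open>card T = _\<close>)
  also have "\<dots> \<le> (\<Sum>x\<in>G. real (card (N x) choose t))" using assms(5) by (rule sum_bounded_below)
  also have "\<dots> = (\<Sum>S\<in>T. real (card {x\<in>G. S \<subseteq> N x}))"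
    using sum_binomial_card_eq_sum_card_common[OF assms(1-3), where t = t]
    unfolding T_def of_nat_sum[symmetric] by simp
  finally show ?thesis using exists_ge_average[of T] \<open>T \<noteq> {}\<close> \<open>finite T\<close> by (auto simp: T_def)
qed

lemma dense_relation_biclique:
  fixes R :: "'a \<Rightarrow> 'b \<Rightarrow> bool" and \<delta> :: real
  assumes "finite X" "finite Y" "0 < \<delta>" "\<delta> \<le> 1"
    and "real t \<le> \<delta> * card Y / 4"
    and "\<delta> * card X * card Y \<le> card {(x, y) \<in> X \<times> Y. R x y}"
  shows "\<exists>S X'. S \<subseteq> Y \<and> card S = t \<and> X' \<subseteq> X \<and>
           card X * (\<delta> / 2) * (\<delta> / 4) ^ t \<le> card X' \<and> (\<forall>x\<in>X'. \<forall>y\<in>S. R x y)"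
proof (cases "Y = {}")
  case True
  then have "t = 0" using assms(5) by simp
  moreover have "card X * (\<delta> / 2) \<le> card X * (1::real)" using assms(4) by (intro mult_left_mono) auto
  ultimately show ?thesis by (intro exI[of _ "{}"] exI[of _ X]) auto
next
  case False
  define n where "n = card Y"
  have "0 < n" using False assms(2) by (simp add: n_def card_gt_0_iff)
  define N where "N x = {y\<in>Y. R x y}" for x
  have N_sub: "N x \<subseteq> Y" for x by (auto simp: N_def)
  have card_N: "card (N x) \<le> n" for x unfolding n_def using assms(2) N_sub by (rule card_mono)
  have "{(x, y) \<in> X \<times> Y. R x y} = (SIGMA x:X. N x)" by (auto simp: N_def)
  then have "card {(x, y) \<in> X \<times> Y. R x y} = (\<Sum>x\<in>X. card (N x))"
    using assms(1,2) by (simp add: N_def)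
  then have density: "\<delta> * card X * n \<le> (\<Sum>x\<in>X. real (card (N x)))"
    using assms(6) by (simp add: n_def)
  define G where "G = {x\<in>X. \<delta> * n / 2 \<le> card (N x)}"
  have G_large: "\<delta> * card X / 2 \<le> card G"
    unfolding G_def using \<open>0 < n\<close> assms(1,3) card_N
    by (intro reverse_markov_card) (auto simp: density)
  have row: "real (n choose t) * (\<delta> / 4) ^ t \<le> real (card (N x) choose t)" if "x \<in> G" for x
  proof -
    have "\<delta> / 4 \<le> real (card (N x)) / (2 * real n)" using that \<open>0 < n\<close> by (simp add: G_def field_simps)
    then have "real (n choose t) * (\<delta> / 4) ^ t \<le> real (n choose t) * (real (card (N x)) / (2 * real n)) ^ t"
      using assms(3) by (intro mult_left_mono power_mono) auto
    also have "\<dots> \<le> real (card (N x) choose t)"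
      using that assms(5) by (intro binomial_mult_power_le[OF card_N]) (simp add: G_def n_def)
    finally show ?thesis .
  qed
  have "\<delta> * n / 4 \<le> n" using assms(3,4) mult_left_le_one_le[of "real n" \<delta>] by simp
  then have "t \<le> card Y" using assms(5) by (simp add: n_def)
  moreover have "finite G" using assms(1) by (simp add: G_def)
  ultimately have "\<exists>S\<subseteq>Y. card S = t \<and> card G * (\<delta> / 4) ^ t \<le> card {x\<in>G. S \<subseteq> N x}"
    using row by (intro exists_subset_large_common_neighbourhood[OF _ assms(2) N_sub]) (auto simp: n_def)
  then obtain S where "S \<subseteq> Y" "card S = t" and "card G * (\<delta> / 4) ^ t \<le> card {x\<in>G. S \<subseteq> N x}"
    by blast
  moreover have "card X * (\<delta> / 2) * (\<delta> / 4) ^ t \<le> card G * (\<delta> / 4) ^ t"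
    using G_large assms(3) by (intro mult_right_mono) (auto simp: mult.commute)
  ultimately show ?thesis
    by (intro exI[of _ S] exI[of _ "{x\<in>G. S \<subseteq> N x}"]) (auto simp: G_def N_def)
qed

lemma card_le_card_pairs:
  assumes "uniform_hypergraph 2 V E"
  shows "card E \<le> card {(x, y) \<in> V \<times> V. {x, y} \<in> E}"
proof -
  let ?P = "{(x, y) \<in> V \<times> V. {x, y} \<in> E}"
  have "finite ?P"
    using assms by (intro finite_subset[of ?P "V \<times> V"]) (auto simp: uniform_hypergraph_def)
  have "E \<subseteq> (\<lambda>(x, y). {x, y}) ` ?P"
  proof
    fix e assume "e \<in> E"
    with assms obtain x y where "e = {x, y}" "x \<in> V" "y \<in> V"
      unfolding uniform_hypergraph_def by (metis card_2_iff insert_subset)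
    with \<open>e \<in> E\<close> show "e \<in> (\<lambda>(x, y). {x, y}) ` ?P" by force
  qed
  then have "card E \<le> card ((\<lambda>(x, y). {x, y}) ` ?P)" using \<open>finite ?P\<close> by (intro card_mono) auto
  also have "\<dots> \<le> card ?P" using \<open>finite ?P\<close> by (rule card_image_le)
  finally show ?thesis .
qed

lemma card_le_card_triples:
  assumes "uniform_hypergraph 3 V E"
  shows "card E \<le> card {(p, z) \<in> (V \<times> V) \<times> V. {fst p, snd p, z} \<in> E}"
proof -
  let ?P = "{(p, z) \<in> (V \<times> V) \<times> V. {fst p, snd p, z} \<in> E}"
  have "finite ?P"
    using assms by (intro finite_subset[of ?P "(V \<times> V) \<times> V"]) (auto simp: uniform_hypergraph_def)
  have "E \<subseteq> (\<lambda>(p, z). {fst p, snd p, z}) ` ?P"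
  proof
    fix e assume "e \<in> E"
    with assms obtain x y z where "e = {x, y, z}" "x \<in> V" "y \<in> V" "z \<in> V"
      unfolding uniform_hypergraph_def by (metis card_3_iff insert_subset)
    with \<open>e \<in> E\<close> show "e \<in> (\<lambda>(p, z). {fst p, snd p, z}) ` ?P"
      by (intro rev_image_eqI[of "((x, y), z)"]) auto
  qed
  then have "card E \<le> card ((\<lambda>(p, z). {fst p, snd p, z}) ` ?P)" using \<open>finite ?P\<close> by (intro card_mono) auto
  also have "\<dots> \<le> card ?P" using \<open>finite ?P\<close> by (rule card_image_le)
  finally show ?thesis .
qed

lemma card_pairs_ge_if_dense:
  fixes \<eta> :: real
  assumes "uniform_hypergraph 2 V E" "2 \<le> card V" "0 \<le> \<eta>"
    and "\<eta> * real (card V choose 2) \<le> real (card E)"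
  shows "(\<eta> / 4) * card V * card V \<le> card {(x, y) \<in> V \<times> V. {x, y} \<in> E}"
proof -
  have "(\<eta> / 4) * card V * card V = \<eta> * (card V / 2) ^ 2" by (simp add: power2_eq_square)
  also have "\<dots> \<le> \<eta> * real (card V choose 2)"
    using binomial_ge_n_over_k_pow_k[of 2 "card V"] assms(2,3) by (intro mult_left_mono) auto
  also have "\<dots> \<le> card {(x, y) \<in> V \<times> V. {x, y} \<in> E}"
    using assms(4) card_le_card_pairs[OF assms(1)] by simp
  finally show ?thesis .
qed

lemma card_triples_ge_if_dense:
  fixes \<eta> :: real
  assumes "uniform_hypergraph 3 V E" "3 \<le> card V" "0 \<le> \<eta>"
    and "\<eta> * real (card V choose 3) \<le> real (card E)"
  shows "(\<eta> / 27) * card (V \<times> V) * card V \<le> card {(p, z) \<in> (V \<times> V) \<times> V. {fst p, snd p, z} \<in> E}"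
proof -
  have "(\<eta> / 27) * card (V \<times> V) * card V = \<eta> * (card V / 3) ^ 3"
    by (simp add: card_cartesian_product power3_eq_cube)
  also have "\<dots> \<le> \<eta> * real (card V choose 3)"
    using binomial_ge_n_over_k_pow_k[of 3 "card V"] assms(2,3) by (intro mult_left_mono) auto
  also have "\<dots> \<le> card {(p, z) \<in> (V \<times> V) \<times> V. {fst p, snd p, z} \<in> E}"
    using assms(4) card_le_card_triples[OF assms(1)] by simp
  finally show ?thesis .
qed

lemma contains_KI:
  assumes E: "uniform_hypergraph r V E"
    and A: "\<And>i. i < r \<Longrightarrow> A i \<subseteq> V \<and> card (A i) = t"
    and transversal: "\<And>f. (\<forall>i<r. f i \<in> A i) \<Longrightarrow> f ` {..<r} \<in> E"
  shows "contains_K r t V E"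
proof -
  have "A i \<inter> A j = {}" if "i < r" "j < r" "i \<noteq> j" for i j
  proof (rule ccontr)
    assume "A i \<inter> A j \<noteq> {}"
    then obtain w where w: "w \<in> A i" "w \<in> A j" by blast
    have "finite V" using E by (simp add: uniform_hypergraph_def)
    then have "A k \<noteq> {}" if "k < r" for k
      using A[OF that] A[OF \<open>i < r\<close>] w(1) by (metis card_eq_0_iff empty_iff finite_subset)
    define f where "f k = (if k = i \<or> k = j then w else SOME a. a \<in> A k)" for k
    have "\<forall>k<r. f k \<in> A k"
      using w \<open>\<And>k. k < r \<Longrightarrow> A k \<noteq> {}\<close> by (auto simp: f_def some_in_eq)
    then have "card (f ` {..<r}) = r" using transversal E by (simp add: uniform_hypergraph_def)
    moreover have "f ` {..<r} = f ` ({..<r} - {j})"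
    proof -
      have "f j = f i" "i \<in> {..<r} - {j}" using that by (auto simp: f_def)
      then have "f j \<in> f ` ({..<r} - {j})" by (metis imageI)
      then show ?thesis using \<open>j < r\<close> by (metis image_insert insert_Diff insert_absorb lessThan_iff)
    qed
    moreover have "card (f ` ({..<r} - {j})) < r"
      using that card_image_le[of "{..<r} - {j}" f] by simp
    ultimately show False by simp
  qed
  then show ?thesis unfolding contains_K_def using A transversal by blast
qed

lemma contains_K2_if_dense:
  fixes \<eta> :: real
  assumes E: "uniform_hypergraph 2 V E" and "2 \<le> card V" "0 < \<eta>" "\<eta> \<le> 1"
    and dense: "\<eta> * real (card V choose 2) \<le> real (card E)"
    and t: "real t \<le> card V * (\<eta> / 16) ^ (t + 1)"
  shows "contains_K 2 t V E"
proof -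
  define n where "n = card V"
  have "finite V" using E by (simp add: uniform_hypergraph_def)
  have density: "(\<eta> / 4) * n * n \<le> card {(x, y) \<in> V \<times> V. {x, y} \<in> E}"
    using card_pairs_ge_if_dense[OF E] assms(2-3) dense by (simp add: n_def)
  have "real t \<le> n * (\<eta> / 16) ^ (t + 1)" using t by (simp add: n_def)
  also have "\<dots> \<le> n * (\<eta> / 16) ^ 1" using assms(3,4) by (intro mult_left_mono power_decreasing) auto
  finally have "real t \<le> (\<eta> / 4) * n / 4" by (simp add: mult.commute)
  then obtain S X where S: "S \<subseteq> V" "card S = t" and "X \<subseteq> V"
    and X: "n * (\<eta> / 4 / 2) * (\<eta> / 4 / 4) ^ t \<le> card X" and adj: "\<forall>x\<in>X. \<forall>y\<in>S. {x, y} \<in> E"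
    using dense_relation_biclique[OF \<open>finite V\<close> \<open>finite V\<close>, of "\<eta> / 4" t "\<lambda>x y. {x, y} \<in> E"]
      density assms(3,4) by (auto simp: n_def)
  have "real t \<le> n * ((\<eta> / 16) * (\<eta> / 16) ^ t)" using t by (simp add: n_def)
  also have "\<dots> \<le> n * (\<eta> / 4 / 2) * (\<eta> / 4 / 4) ^ t" using assms(3) by (simp add: mult_right_mono)
  finally have "t \<le> card X" using X by simp
  then obtain A where "A \<subseteq> X" "card A = t" by (rule obtain_subset_with_card_n)
  show ?thesis
  proof (rule contains_KI[OF E, of "\<lambda>i. if i = 0 then A else S"])
    show "\<And>i::nat. i < 2 \<Longrightarrow> (if i = 0 then A else S) \<subseteq> V \<and> card (if i = 0 then A else S) = t"
      using S \<open>A \<subseteq> X\<close> \<open>card A = t\<close> \<open>X \<subseteq> V\<close> by auto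
    fix f :: "nat \<Rightarrow> 'a" assume "\<forall>i<2. f i \<in> (if i = 0 then A else S)"
    from this[rule_format, of 0] this[rule_format, of 1] have "f 0 \<in> A" "f 1 \<in> S" by simp_all
    moreover have "f ` {..<2} = {f 0, f 1}" by (auto simp: numeral_2_eq_2 lessThan_Suc)
    ultimately show "f ` {..<2} \<in> E" using adj \<open>A \<subseteq> X\<close> by auto
  qed
qed

lemma contains_K3_if_dense_pair_set:
  fixes \<delta> :: real
  assumes E: "uniform_hypergraph 3 V E" and \<delta>: "0 < \<delta>" "\<delta> \<le> 1"
    and S: "S \<subseteq> V" "card S = t" and "P \<subseteq> V \<times> V"
    and adj: "\<forall>p\<in>P. \<forall>z\<in>S. {fst p, snd p, z} \<in> E"
    and dense: "\<delta> * card V * card V \<le> card P"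
    and t: "real t \<le> \<delta> * card V / 4" "real t \<le> card V * (\<delta> / 2) * (\<delta> / 4) ^ t"
  shows "contains_K 3 t V E"
proof -
  have "finite V" using E by (simp add: uniform_hypergraph_def)
  have "{(x, y) \<in> V \<times> V. (x, y) \<in> P} = P" using \<open>P \<subseteq> V \<times> V\<close> by auto
  with dense \<delta> t(1) \<open>finite V\<close> have "\<exists>S2 X. S2 \<subseteq> V \<and> card S2 = t \<and> X \<subseteq> V \<and>
      card V * (\<delta> / 2) * (\<delta> / 4) ^ t \<le> card X \<and> (\<forall>x\<in>X. \<forall>y\<in>S2. (x, y) \<in> P)"
    by (intro dense_relation_biclique) auto
  then obtain S2 X where S2: "S2 \<subseteq> V" "card S2 = t" and "X \<subseteq> V"
    and X: "card V * (\<delta> / 2) * (\<delta> / 4) ^ t \<le> card X" and adj2: "\<forall>x\<in>X. \<forall>y\<in>S2. (x, y) \<in> P"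
    by blast
  from t(2) X have "t \<le> card X" by simp
  then obtain A where "A \<subseteq> X" "card A = t" by (rule obtain_subset_with_card_n)
  let ?A = "\<lambda>i::nat. if i = 0 then A else if i = 1 then S2 else S"
  show ?thesis
  proof (rule contains_KI[OF E, of ?A])
    show "\<And>i. i < 3 \<Longrightarrow> ?A i \<subseteq> V \<and> card (?A i) = t"
      using S S2 \<open>A \<subseteq> X\<close> \<open>card A = t\<close> \<open>X \<subseteq> V\<close> by auto
    fix f :: "nat \<Rightarrow> 'a" assume "\<forall>i<3. f i \<in> ?A i"
    from this[rule_format, of 0] this[rule_format, of 1] this[rule_format, of 2]
    have "f 0 \<in> A" "f 1 \<in> S2" "f 2 \<in> S" by simp_all
    then have "(f 0, f 1) \<in> P" using adj2 \<open>A \<subseteq> X\<close> by blast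
    then have "{f 0, f 1, f 2} \<in> E" using adj \<open>f 2 \<in> S\<close> by fastforce
    moreover have "f ` {..<3} = {f 0, f 1, f 2}" by (auto simp: numeral_3_eq_3 numeral_2_eq_2 lessThan_Suc)
    ultimately show "f ` {..<3} \<in> E" by simp
  qed
qed

lemma contains_K3_if_dense:
  fixes \<eta> :: real
  assumes E: "uniform_hypergraph 3 V E" and "3 \<le> card V" "0 < \<eta>" "\<eta> \<le> 1"
    and dense: "\<eta> * real (card V choose 3) \<le> real (card E)"
    and t: "real t \<le> card V * (\<eta> / 108) ^ (t + 2)\<^sup>2"
  shows "contains_K 3 t V E"
proof -
  define n \<beta> where "n = card V" and "\<beta> = \<eta> / 108"
  have \<beta>: "0 < \<beta>" "\<beta> \<le> 1 / 4" using assms(3,4) by (auto simp: \<beta>_def)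
  have "finite V" using E by (simp add: uniform_hypergraph_def)
  have t_le: "real t \<le> n * \<beta> ^ (t + 2)\<^sup>2" using t by (simp add: n_def \<beta>_def)
  have density: "(4 * \<beta>) * card (V \<times> V) * card V \<le> card {(p, z) \<in> (V \<times> V) \<times> V. {fst p, snd p, z} \<in> E}"
    using card_triples_ge_if_dense[OF E] assms(2-3) dense by (simp add: \<beta>_def)
  have "n * \<beta> ^ (t + 2)\<^sup>2 \<le> n * \<beta>"
    using \<beta> power_decreasing[of 1 "(t + 2)\<^sup>2" \<beta>] by (intro mult_left_mono) auto
  moreover have "(4 * \<beta>) * card V / 4 = n * \<beta>" by (simp add: n_def)
  ultimately have "real t \<le> (4 * \<beta>) * card V / 4" using t_le by linarith
  with density \<beta> \<open>finite V\<close> have "\<exists>S P. S \<subseteq> V \<and> card S = t \<and> P \<subseteq> V \<times> V \<and>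
      card (V \<times> V) * (4 * \<beta> / 2) * (4 * \<beta> / 4) ^ t \<le> card P \<and>
      (\<forall>p\<in>P. \<forall>z\<in>S. {fst p, snd p, z} \<in> E)"
    by (intro dense_relation_biclique) auto
  then obtain S P where S: "S \<subseteq> V" "card S = t" "P \<subseteq> V \<times> V"
    and P: "card (V \<times> V) * (4 * \<beta> / 2) * (4 * \<beta> / 4) ^ t \<le> card P"
    and adj: "\<forall>p\<in>P. \<forall>z\<in>S. {fst p, snd p, z} \<in> E"
    by blast
  define \<delta> where "\<delta> = 2 * \<beta> ^ (t + 1)"
  have "\<beta> ^ (t + 1) \<le> \<beta> ^ 1" using \<beta> by (intro power_decreasing) auto
  then have \<delta>: "0 < \<delta>" "\<delta> \<le> 1" using \<beta> unfolding \<delta>_def power_one_right by (simp, linarith)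
  have "\<delta> * card V * card V \<le> card P" using P by (simp add: \<delta>_def card_cartesian_product algebra_simps)
  moreover have "real t \<le> \<delta> * card V / 4"
  proof -
    have "n * \<beta> ^ (t + 2)\<^sup>2 \<le> n * \<beta> ^ (t + 2)"
      using \<beta> by (intro mult_left_mono power_decreasing) (auto simp: power2_eq_square)
    with t_le have "real t \<le> n * \<beta> ^ (t + 2)" by linarith
    also have "\<dots> = n * (\<beta> ^ (t + 1) * \<beta>)" by simp
    also have "\<dots> \<le> n * (\<beta> ^ (t + 1) * (1 / 2))" using \<beta> by (intro mult_left_mono) auto
    finally show ?thesis by (simp add: \<delta>_def n_def ac_simps)
  qed
  moreover have "real t \<le> card V * (\<delta> / 2) * (\<delta> / 4) ^ t"
  proof -
    have "n * \<beta> ^ (t + 2)\<^sup>2 \<le> n * \<beta> ^ (t + 1 + (t + 2) * t)"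
      using \<beta> by (intro mult_left_mono power_decreasing) (auto simp: power2_eq_square)
    with t_le have "real t \<le> n * \<beta> ^ (t + 1 + (t + 2) * t)" by linarith
    also have "\<dots> = n * \<beta> ^ (t + 1) * (\<beta> ^ (t + 2)) ^ t"
      by (simp only: power_add[of \<beta> "t + 1" "(t + 2) * t"] power_mult mult.assoc)
    also have "\<dots> = n * (\<delta> / 2) * (\<beta> ^ (t + 2)) ^ t" by (simp add: \<delta>_def)
    also have "\<dots> \<le> n * (\<delta> / 2) * (\<delta> / 4) ^ t"
      using \<beta> \<delta> by (intro mult_left_mono power_mono) (auto simp: \<delta>_def)
    finally show ?thesis by (simp add: n_def)
  qed
  ultimately show ?thesis using contains_K3_if_dense_pair_set[OF E \<delta> S adj] by blast
qed

lemma le_mult_power_if_log_le: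
  fixes n \<beta> :: real
  assumes "0 < \<beta>" "0 < n" "real t + log 2 (1 / \<beta>) * m \<le> log 2 n"
  shows "real t \<le> n * \<beta> ^ m"
proof -
  have "real t \<le> 2 powr real t" by (simp add: powr_realpow less_imp_le)
  also have "\<dots> \<le> 2 powr (log 2 n - log 2 (1 / \<beta>) * m)" using assms(3) by simp
  also have "\<dots> = n / (1 / \<beta>) ^ m"
    using assms(1,2) by (simp add: powr_diff powr_powr[symmetric] powr_realpow del: power_one_over)
  also have "\<dots> = n * \<beta> ^ m" by (simp add: power_one_over)
  finally show ?thesis .
qed

lemma real_nat_ceiling_le:
  fixes x :: real
  assumes "0 \<le> x"
  shows "real (nat \<lceil>x\<rceil>) \<le> x + 1"
  using assms by (simp add: of_nat_nat)

lemma eventually_graph_bound: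
  fixes \<eta> :: real
  assumes "0 < \<eta>" "\<eta> \<le> 1" and small: "(log 2 (16 / \<eta>) + 1) * \<eta> \<le> 1 / 2"
  shows "\<forall>\<^sub>F n in sequentially.
    real (nat \<lceil>\<eta> * log 2 n\<rceil>) \<le> n * (\<eta> / 16) ^ (nat \<lceil>\<eta> * log 2 n\<rceil> + 1)"
proof -
  define c where "c = log 2 (16 / \<eta>)"
  have "0 < c" using assms(1,2) by (simp add: c_def)
  have "filterlim (\<lambda>n::nat. log 2 n) at_top sequentially" by real_asymp
  then have "\<forall>\<^sub>F n in sequentially. 4 * (c + 1) \<le> log 2 n" by (simp add: filterlim_at_top)
  then show ?thesis
  proof (rule eventually_mono)
    fix n :: nat
    define l t where "l = log 2 n" and "t = nat \<lceil>\<eta> * l\<rceil>"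
    assume "4 * (c + 1) \<le> log 2 n"
    then have l: "4 * (c + 1) \<le> l" by (simp add: l_def)
    with \<open>0 < c\<close> have "0 < l" by simp
    then have "0 < real n" by (cases "n = 0") (simp_all add: l_def log_def)
    have "real t \<le> \<eta> * l + 1" using assms(1) \<open>0 < l\<close> by (simp add: t_def real_nat_ceiling_le)
    then have "(c + 1) * (real t + 1) \<le> (c + 1) * (\<eta> * l + 2)"
      using \<open>0 < c\<close> by (intro mult_left_mono) auto
    moreover have "((c + 1) * \<eta>) * l \<le> (1 / 2) * l"
      using small \<open>0 < l\<close> by (intro mult_right_mono) (auto simp: c_def)
    ultimately have "real t + log 2 (1 / (\<eta> / 16)) * real (t + 1) \<le> l"
      using l by (simp add: c_def algebra_simps)
    then show "real t \<le> n * (\<eta> / 16) ^ (t + 1)"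
      using assms(1) \<open>0 < real n\<close> by (intro le_mult_power_if_log_le) (auto simp: l_def)
  qed
qed

lemma eventually_hypergraph_bound:
  fixes \<eta> :: real
  assumes "0 < \<eta>" "\<eta> \<le> 1" and small: "log 2 (108 / \<eta>) * \<eta>\<^sup>2 \<le> 1 / 8"
  shows "\<forall>\<^sub>F n in sequentially.
    real (nat \<lceil>\<eta> * sqrt (log 2 n)\<rceil>) \<le> n * (\<eta> / 108) ^ (nat \<lceil>\<eta> * sqrt (log 2 n)\<rceil> + 2)\<^sup>2"
proof -
  define c where "c = log 2 (108 / \<eta>)"
  have "0 < c" using assms(1,2) by (simp add: c_def)
  have "filterlim (\<lambda>n::nat. log 2 n) at_top sequentially" by real_asymp
  then have "\<forall>\<^sub>F n in sequentially. 36 * c + 4 \<le> log 2 n" by (simp add: filterlim_at_top)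
  then show ?thesis
  proof (rule eventually_mono)
    fix n :: nat
    define l L t where "l = log 2 n" and "L = sqrt l" and "t = nat \<lceil>\<eta> * L\<rceil>"
    assume "36 * c + 4 \<le> log 2 n"
    then have l: "36 * c + 4 \<le> l" by (simp add: l_def)
    with \<open>0 < c\<close> have "0 < l" by simp
    then have "0 < real n" by (cases "n = 0") (simp_all add: l_def log_def)
    have LL: "L * L = l" "0 \<le> L" using \<open>0 < l\<close> by (simp_all add: L_def)
    have t: "real t \<le> \<eta> * L + 1" using assms(1) LL(2) by (simp add: t_def real_nat_ceiling_le)
    have "real ((t + 2)\<^sup>2) \<le> (\<eta> * L + 3)\<^sup>2" using t by (simp add: power_mono)
    also have "\<dots> \<le> 2 * (\<eta>\<^sup>2 * (L * L)) + 18"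
      using sum_squares_ge_zero[of "\<eta> * L - 3" 0] by (simp add: power2_eq_square algebra_simps)
    finally have "c * real ((t + 2)\<^sup>2) \<le> c * (2 * (\<eta>\<^sup>2 * l) + 18)"
      using \<open>0 < c\<close> LL by (intro mult_left_mono) auto
    moreover have "(c * \<eta>\<^sup>2) * l \<le> (1 / 8) * l"
      using small \<open>0 < l\<close> by (intro mult_right_mono) (auto simp: c_def)
    moreover have "\<eta> * L \<le> L" using assms(1,2) LL(2) by (intro mult_left_le_one_le) auto
    moreover have "L \<le> l / 4 + 1"
      using sum_squares_ge_zero[of "L - 2" 0] LL by (simp add: power2_eq_square algebra_simps)
    ultimately have "real t + log 2 (1 / (\<eta> / 108)) * real ((t + 2)\<^sup>2) \<le> l"
      using l t by (simp add: c_def algebra_simps)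
    then show "real t \<le> n * (\<eta> / 108) ^ (t + 2)\<^sup>2"
      using assms(1) \<open>0 < real n\<close> by (intro le_mult_power_if_log_le) (auto simp: l_def)
  qed
qed

lemma graph_contains_K_log:
  fixes \<eta> :: real
  assumes "0 < \<eta>" "\<eta> \<le> 1" "(log 2 (16 / \<eta>) + 1) * \<eta> \<le> 1 / 2"
  shows "\<exists>n0. \<forall>(V::'a set) E. uniform_hypergraph 2 V E \<and> n0 < card V \<and>
    \<eta> * real (card V choose 2) \<le> real (card E) \<longrightarrow> contains_K 2 (nat \<lceil>\<eta> * log 2 (card V)\<rceil>) V E"
proof -
  from eventually_conj[OF eventually_ge_at_top[of 2] eventually_graph_bound[OF assms]]
  obtain N :: nat where N: "\<forall>n\<ge>N. 2 \<le> n \<and>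
      real (nat \<lceil>\<eta> * log 2 n\<rceil>) \<le> n * (\<eta> / 16) ^ (nat \<lceil>\<eta> * log 2 n\<rceil> + 1)"
    unfolding eventually_sequentially ..
  show ?thesis
  proof (intro exI[of _ N] allI impI)
    fix V :: "'a set" and E assume "uniform_hypergraph 2 V E \<and> N < card V \<and>
      \<eta> * real (card V choose 2) \<le> real (card E)"
    then have "N \<le> card V" by simp
    from N[rule_format, OF this] \<open>uniform_hypergraph 2 V E \<and> _\<close> assms(1,2)
    show "contains_K 2 (nat \<lceil>\<eta> * log 2 (card V)\<rceil>) V E"
      by (blast intro: contains_K2_if_dense)
  qed
qed

lemma hypergraph_contains_K_sqrt_log:
  fixes \<eta> :: real
  assumes "0 < \<eta>" "\<eta> \<le> 1" "log 2 (108 / \<eta>) * \<eta>\<^sup>2 \<le> 1 / 8"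
  shows "\<exists>n0. \<forall>(V::'a set) E. uniform_hypergraph 3 V E \<and> n0 < card V \<and>
    \<eta> * real (card V choose 3) \<le> real (card E) \<longrightarrow> contains_K 3 (nat \<lceil>\<eta> * sqrt (log 2 (card V))\<rceil>) V E"
proof -
  from eventually_conj[OF eventually_ge_at_top[of 3] eventually_hypergraph_bound[OF assms]]
  obtain N :: nat where N: "\<forall>n\<ge>N. 3 \<le> n \<and>
      real (nat \<lceil>\<eta> * sqrt (log 2 n)\<rceil>) \<le> n * (\<eta> / 108) ^ (nat \<lceil>\<eta> * sqrt (log 2 n)\<rceil> + 2)\<^sup>2"
    unfolding eventually_sequentially ..
  show ?thesis
  proof (intro exI[of _ N] allI impI)
    fix V :: "'a set" and E assume "uniform_hypergraph 3 V E \<and> N < card V \<and>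
      \<eta> * real (card V choose 3) \<le> real (card E)"
    then have "N \<le> card V" by simp
    from N[rule_format, OF this] \<open>uniform_hypergraph 3 V E \<and> _\<close> assms(1,2)
    show "contains_K 3 (nat \<lceil>\<eta> * sqrt (log 2 (card V))\<rceil>) V E"
      by (blast intro: contains_K3_if_dense)
  qed
qed

lemma eventually_small_density:
  "\<forall>\<^sub>F \<eta> in at_right 0.
     \<eta> < 1 \<and> (log 2 (16 / \<eta>) + 1) * \<eta> < 1 / 2 \<and> log 2 (108 / \<eta>) * \<eta>\<^sup>2 < 1 / 8"
proof -
  have lim1: "((\<lambda>\<eta>::real. \<eta>) \<longlongrightarrow> 0) (at_right 0)"
    and lim2: "((\<lambda>\<eta>. (log 2 (16 / \<eta>) + 1) * \<eta>) \<longlongrightarrow> 0) (at_right 0)"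
    and lim3: "((\<lambda>\<eta>. log 2 (108 / \<eta>) * \<eta>\<^sup>2) \<longlongrightarrow> 0) (at_right 0)"
    by real_asymp+
  show ?thesis
    by (intro eventually_conj order_tendstoD(2)[OF lim1] order_tendstoD(2)[OF lim2]
        order_tendstoD(2)[OF lim3]) simp_all
qed

theorem corollary1:
  fixes r :: nat
  assumes "r \<in> {2, 3}"
  shows "\<exists>\<eta>0::real. \<eta>0 > 0 \<and>
    (\<forall>\<eta>::real. 0 < \<eta> \<and> \<eta> < \<eta>0 \<longrightarrow>
      (\<exists>n0::nat. \<forall>(V::'a set) (E::'a set set).
         uniform_hypergraph r V E \<and> card V > n0 \<and>
         real (card E) \<ge> \<eta> * real (card V choose r) \<longrightarrow>
         contains_K r (nat \<lceil>\<eta> * (log 2 (real (card V))) powr (1 / (real r - 1))\<rceil>) V E))"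
proof -
  obtain \<eta>0 :: real where "0 < \<eta>0" and \<eta>0: "\<And>\<eta>. 0 < \<eta> \<Longrightarrow> \<eta> < \<eta>0 \<Longrightarrow>
      \<eta> < 1 \<and> (log 2 (16 / \<eta>) + 1) * \<eta> < 1 / 2 \<and> log 2 (108 / \<eta>) * \<eta>\<^sup>2 < 1 / 8"
    using eventually_small_density by (auto simp: eventually_at_right_field)
  have log_nonneg: "0 \<le> log 2 (real (card V))" if "n0 < card V" for n0 and V :: "'a set"
    using that by simp
  show ?thesis
  proof (intro exI[of _ \<eta>0] conjI allI impI)
    fix \<eta> :: real assume "0 < \<eta> \<and> \<eta> < \<eta>0"
    with \<eta>0 have \<eta>: "0 < \<eta>" "\<eta> \<le> 1"
      and small: "(log 2 (16 / \<eta>) + 1) * \<eta> \<le> 1 / 2" "log 2 (108 / \<eta>) * \<eta>\<^sup>2 \<le> 1 / 8"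
      by (auto intro: less_imp_le)
    from assms consider "r = 2" | "r = 3" by auto
    then show "\<exists>n0. \<forall>(V::'a set) E. uniform_hypergraph r V E \<and> n0 < card V \<and>
        \<eta> * real (card V choose r) \<le> real (card E) \<longrightarrow>
        contains_K r (nat \<lceil>\<eta> * log 2 (real (card V)) powr (1 / (real r - 1))\<rceil>) V E"
    proof cases
      case 1
      with graph_contains_K_log[OF \<eta> small(1)] show ?thesis by (auto dest: log_nonneg simp: powr_one)
    next
      case 2
      with hypergraph_contains_K_sqrt_log[OF \<eta> small(2)] show ?thesis
        by (auto dest: log_nonneg simp: powr_half_sqrt)
    qed
  qed (simp add: \<open>0 < \<eta>0\<close>)
qed

end
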